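(* A finite transitive permutation group $G$ whose point stabilizers have order $2$ has the EKR property if (i) $G$ has a cyclic Sylow $2$-subgroup, or (ii) $G$ is a nilpotent group.
   Context: For a permutation group $G$ on a finite set $V$, a subset $\mathcal{F}\subseteq G$ is intersecting if for all $g,h\in\mathcal{F}$ there is $v\in V$ with $g(v)=h(v)$. $G$ has the Erdős–Ko–Rado (EKR) property if the maximum size of an intersecting set of $G$ equals the maximum order of a point stabilizer $G_v$, $v\in V$. *)

theory Defs
  imports "HOL-Algebra.Algebra" "HOL-Computational_Algebra.Primes"
begin

definition perm_group :: "'a set \<Rightarrow> ('a \<Rightarrow> 'a) set \<Rightarrow> bool" where
  "perm_group V G \<longleftrightarrow> finite V \<and> subgroup G (BijGroup V)"

definition pgroup :: "'a set \<Rightarrow> ('a \<Rightarrow> 'a) set \<Rightarrow> ('a \<Rightarrow> 'a) monoid" where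
  "pgroup V G = subgroup_generated (BijGroup V) G"

definition point_stab :: "('a \<Rightarrow> 'a) set \<Rightarrow> 'a \<Rightarrow> ('a \<Rightarrow> 'a) set" where
  "point_stab G v = {g \<in> G. g v = v}"

definition transitive_on :: "'a set \<Rightarrow> ('a \<Rightarrow> 'a) set \<Rightarrow> bool" where
  "transitive_on V G \<longleftrightarrow> (\<forall>u\<in>V. \<forall>w\<in>V. \<exists>g\<in>G. g u = w)"

definition intersecting :: "'a set \<Rightarrow> ('a \<Rightarrow> 'a) set \<Rightarrow> ('a \<Rightarrow> 'a) set \<Rightarrow> bool" where
  "intersecting V G F \<longleftrightarrow> F \<subseteq> G \<and> (\<forall>g\<in>F. \<forall>h\<in>F. \<exists>v\<in>V. g v = h v)"

definition EKR :: "'a set \<Rightarrow> ('a \<Rightarrow> 'a) set \<Rightarrow> bool" where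
  "EKR V G \<longleftrightarrow>
     Max {card F | F. intersecting V G F} = Max {card (point_stab G v) | v. v \<in> V}"

definition sylow_subgroup :: "nat \<Rightarrow> ('g, 'b) monoid_scheme \<Rightarrow> 'g set \<Rightarrow> bool" where
  "sylow_subgroup p H P \<longleftrightarrow>
     subgroup P H \<and> card P = p ^ multiplicity p (order H)"

fun lower_central :: "('g, 'b) monoid_scheme \<Rightarrow> nat \<Rightarrow> 'g set" where
  "lower_central H 0 = carrier H"
| "lower_central H (Suc n) =
     generate H {a \<otimes>\<^bsub>H\<^esub> b \<otimes>\<^bsub>H\<^esub> inv\<^bsub>H\<^esub> a \<otimes>\<^bsub>H\<^esub> inv\<^bsub>H\<^esub> b
                 | a b. a \<in> lower_central H n \<and> b \<in> carrier H}"

definition nilpotent_group :: "('g, 'b) monoid_scheme \<Rightarrow> bool" where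
  "nilpotent_group H \<longleftrightarrow> (\<exists>n. lower_central H n = {\<one>\<^bsub>H\<^esub>})"

end

theory Submission
  imports Defs
begin

text \<open>Two members of an intersecting set differ by a non-identity element fixing a point.
  Since stabilisers have order 2 and G is transitive, these elements are involutions forming a
  single conjugacy class. Three members f1, f2, f3 of an intersecting set thus give such involutions
  x = f1^-1 f2 and y = f2^-1 f3 whose product f1^-1 f3 is again one: a Klein four-group with
  pairwise conjugate involutions. This is impossible in both cases, so intersecting sets have at
  most 2 elements, the order of a point stabiliser.
  If G is nilpotent: with c = xy the pair (c, x) is again such a triple, and x = [c, g] where
  y = g c g^-1, so by induction x lies in every term of the lower central series.
  If a Sylow 2-subgroup P is cyclic: x and y act as commuting involutions on the odd number of
  right cosets of P, so counting fixed points mod 2 yields a coset fixed by both; hence a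
  conjugate of the four-group lies in P, but a cyclic group has only one involution.\<close>

lemma card_fixed_points_parity:
  assumes "finite A" "f ` A \<subseteq> A" "\<And>z. z \<in> A \<Longrightarrow> f (f z) = z"
  shows "even (card A) \<longleftrightarrow> even (card {z \<in> A. f z = z})"
proof -
  define C where "C = (\<lambda>z. {z, f z}) ` {z \<in> A. f z \<noteq> z}"
  have moved: "{z \<in> A. f z \<noteq> z} = \<Union>C"
    using assms(2,3) by (auto simp: C_def)
  have "2 * card C = card (\<Union>C)"
  proof (rule card_partition)
    show "finite C" using assms(1) by (simp add: C_def)
    show "finite (\<Union>C)" using assms(1) moved[symmetric] by simp
    show "card c = 2" if "c \<in> C" for c using that by (auto simp: C_def)
    show "c1 \<inter> c2 = {}" if c: "c1 \<in> C" "c2 \<in> C" "c1 \<noteq> c2" for c1 c2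
    proof -
      obtain z w where zw: "z \<in> A" "w \<in> A" "c1 = {z, f z}" "c2 = {w, f w}"
        using c(1,2) by (auto simp: C_def)
      have "z \<noteq> w" using zw c(3) by blast
      moreover have "z \<noteq> f w" using zw c(3) assms(3)[OF zw(2)] by (metis insert_commute)
      moreover have "f z \<noteq> w" using \<open>z \<noteq> f w\<close> assms(3)[OF zw(1)] by auto
      moreover have "f z \<noteq> f w" using \<open>z \<noteq> w\<close> assms(3)[OF zw(1)] assms(3)[OF zw(2)] by metis
      ultimately have "z \<notin> c2" "f z \<notin> c2" using zw(4) by simp_all
      then show ?thesis using zw by auto
    qed
  qed
  moreover have "card A = card {z \<in> A. f z = z} + card {z \<in> A. f z \<noteq> z}"
    using assms(1) by (subst card_Un_disjoint[symmetric]) (auto intro: arg_cong[where f = card])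
  ultimately show ?thesis using moved by (metis even_add dvd_triv_left)
qed

lemma dvd_add_if_dvd_double_not_dvd:
  fixes m i j :: int
  assumes "m dvd 2 * i" "\<not> m dvd i" "m dvd 2 * j" "\<not> m dvd j"
  shows "m dvd i + j"
proof -
  obtain k l where k: "2 * i = m * k" and l: "2 * j = m * l"
    using assms(1,3) by (auto simp: dvd_def)
  have "odd k" "odd l"
    using k l assms(2,4) by (auto elim!: evenE simp: mult.left_commute)
  then obtain t where t: "k + l = 2 * t" by (metis odd_add evenE)
  have "2 * (i + j) = m * (k + l)" using k l by (simp add: algebra_simps)
  then have "i + j = m * t" using t by simp
  then show ?thesis by simp
qed

lemma (in group) cyclic_group_involution_unique:
  assumes "cyclic_group G" "u \<in> carrier G" "w \<in> carrier G"
    "u \<otimes> u = \<one>" "w \<otimes> w = \<one>" "u \<noteq> \<one>" "w \<noteq> \<one>"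
  shows "u = w"
proof -
  obtain c where c: "c \<in> carrier G" "carrier G = range (\<lambda>n::int. c [^] n)"
    using assms(1) unfolding cyclic_group by blast
  obtain i j :: int where i: "u = c [^] i" and j: "w = c [^] j"
    using assms(2,3) c(2) by blast
  have ord: "c [^] k = \<one> \<longleftrightarrow> int (ord c) dvd k" for k :: int
    using int_pow_eq_id[OF c(1)] .
  have pow_add: "c [^] (a + b) = c [^] a \<otimes> c [^] b" for a b :: int
    using int_pow_mult[OF c(1)] .
  have "int (ord c) dvd 2 * i" "int (ord c) dvd 2 * j"
    using assms(4,5) unfolding i j ord[symmetric] mult_2 pow_add .
  moreover have "\<not> int (ord c) dvd i" "\<not> int (ord c) dvd j"
    using assms(6,7) unfolding i j ord[symmetric] .
  ultimately have "int (ord c) dvd i + j" using dvd_add_if_dvd_double_not_dvd by blast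
  then have "u \<otimes> w = \<one>" unfolding i j ord[symmetric] pow_add .
  then show ?thesis using assms(2,3,5) by (metis inv_equality)
qed

lemma (in group) involutions_commute:
  assumes "x \<in> carrier G" "y \<in> carrier G"
    "x \<otimes> x = \<one>" "y \<otimes> y = \<one>" "(x \<otimes> y) \<otimes> (x \<otimes> y) = \<one>"
  shows "x \<otimes> y = y \<otimes> x"
proof -
  have "inv x = x" "inv y = y" "inv (x \<otimes> y) = x \<otimes> y"
    using assms by (simp_all add: inv_equality)
  then show ?thesis using assms(1,2) inv_mult_group[of x y] by simp
qed

lemma (in group) conj_mem_if_rcos_fixed:
  assumes "subgroup P G" "a \<in> carrier G" "u \<in> carrier G" "P #> a #> u = P #> a"
  shows "a \<otimes> u \<otimes> inv a \<in> P"
proof -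
  have "a \<otimes> u \<in> P #> (a \<otimes> u)" using rcos_self[OF _ assms(1)] assms(2,3) by simp
  also have "\<dots> = P #> a"
    using assms coset_mult_assoc[OF subgroup.subset[OF assms(1)]] by simp
  finally show ?thesis using subgroup.rcos_module_imp[OF assms(1) is_group] assms(2,3) by simp
qed

lemma (in group) sylow_index_not_dvd:
  assumes "finite (carrier G)" "1 < p" "sylow_subgroup p G P"
  shows "\<not> p dvd card (rcosets P)"
proof -
  have "order G \<noteq> 0" using assms(1) by (simp add: order_gt_0_iff_finite)
  moreover have "\<not> is_unit p" using assms(2) by simp
  ultimately obtain q where q: "order G = p ^ multiplicity p (order G) * q" "\<not> p dvd q"
    by (rule multiplicity_decompose')
  have P: "subgroup P G" "card P = p ^ multiplicity p (order G)"
    using assms(3) by (simp_all add: sylow_subgroup_def)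
  have "card (rcosets P) * p ^ multiplicity p (order G) = order G"
    using lagrange[OF P(1)] P(2) by simp
  then have "card (rcosets P) * p ^ multiplicity p (order G) = q * p ^ multiplicity p (order G)"
    using q(1) by (simp add: mult.commute)
  then have "card (rcosets P) = q" using assms(2) by simp
  then show ?thesis using q(2) by simp
qed

lemma (in group) commuting_involutions_conj_into_sylow:
  assumes "finite (carrier G)" "sylow_subgroup 2 G P"
    and x: "x \<in> carrier G" "x \<otimes> x = \<one>" and y: "y \<in> carrier G" "y \<otimes> y = \<one>"
    and commute: "x \<otimes> y = y \<otimes> x"
  shows "\<exists>a\<in>carrier G. a \<otimes> x \<otimes> inv a \<in> P \<and> a \<otimes> y \<otimes> inv a \<in> P"
proof -
  have P: "subgroup P G" using assms(2) by (simp add: sylow_subgroup_def)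
  have fin: "finite (rcosets P)" using assms(1) by (simp add: RCOSETS_def)
  have sub: "S \<subseteq> carrier G" if "S \<in> rcosets P" for S
    using subgroup.rcosets_carrier[OF P is_group that] .
  have act_closed: "S #> u \<in> rcosets P" if S: "S \<in> rcosets P" and u: "u \<in> carrier G" for S u
  proof -
    obtain b where b: "b \<in> carrier G" "S = P #> b" using S by (auto simp: RCOSETS_def)
    then have "S #> u = P #> (b \<otimes> u)"
      using coset_mult_assoc[OF subgroup.subset[OF P]] u by simp
    then show ?thesis using rcosetsI[OF subgroup.subset[OF P]] b(1) u by simp
  qed
  have act_invol: "S #> u #> u = S" if "S \<in> rcosets P" "u \<in> carrier G" "u \<otimes> u = \<one>" for S u
    using coset_mult_assoc[OF sub[OF that(1)] that(2,2)] that(3) sub[OF that(1)] by simp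
  define Fx where "Fx = {S \<in> rcosets P. S #> x = S}"
  have y_closed: "S #> y \<in> Fx" if "S \<in> Fx" for S
  proof -
    have S: "S \<in> rcosets P" "S #> x = S" using that by (simp_all add: Fx_def)
    have "S #> y #> x = S #> x #> y"
      using coset_mult_assoc[OF sub[OF S(1)]] x(1) y(1) commute by simp
    then show ?thesis using S act_closed y(1) by (simp add: Fx_def)
  qed
  have "odd (card (rcosets P))"
    using sylow_index_not_dvd[OF assms(1) _ assms(2)] by simp
  moreover have "even (card (rcosets P)) \<longleftrightarrow> even (card Fx)"
    unfolding Fx_def by (rule card_fixed_points_parity[OF fin]) (use act_closed act_invol x in auto)
  moreover have "even (card Fx) \<longleftrightarrow> even (card {S \<in> Fx. S #> y = S})"
    by (rule card_fixed_points_parity) (use fin y_closed act_invol y in \<open>auto simp: Fx_def\<close>)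
  ultimately have "odd (card {S \<in> Fx. S #> y = S})" by simp
  then have "{S \<in> Fx. S #> y = S} \<noteq> {}" by (metis card.empty even_zero)
  then obtain S where S: "S \<in> rcosets P" "S #> x = S" "S #> y = S" by (auto simp: Fx_def)
  then obtain a where "a \<in> carrier G" "S = P #> a" by (auto simp: RCOSETS_def)
  then show ?thesis using conj_mem_if_rcos_fixed[OF P] x y S(2,3) by blast
qed

lemma (in group) no_four_group_if_cyclic_sylow:
  assumes "finite (carrier G)" "sylow_subgroup 2 G P" "cyclic_group (subgroup_generated G P)"
    and x: "x \<in> carrier G" "x \<otimes> x = \<one>" "x \<noteq> \<one>"
    and y: "y \<in> carrier G" "y \<otimes> y = \<one>" "y \<noteq> \<one>"
    and xy: "(x \<otimes> y) \<otimes> (x \<otimes> y) = \<one>" "x \<noteq> y"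
  shows False
proof -
  have P: "subgroup P G" using assms(2) by (simp add: sylow_subgroup_def)
  obtain a where a: "a \<in> carrier G" "a \<otimes> x \<otimes> inv a \<in> P" "a \<otimes> y \<otimes> inv a \<in> P"
    using commuting_involutions_conj_into_sylow[OF assms(1,2) x(1,2) y(1,2)]
      involutions_commute[OF x(1) y(1) x(2) y(2) xy(1)] by blast
  define conj where "conj z = a \<otimes> z \<otimes> inv a" for z
  have cancel: "inv a \<otimes> (a \<otimes> z) = z" if "z \<in> carrier G" for z
    using that a(1) by (simp add: m_assoc[symmetric])
  have conj_mult: "conj z1 \<otimes> conj z2 = conj (z1 \<otimes> z2)"
    if "z1 \<in> carrier G" "z2 \<in> carrier G" for z1 z2
    using that a(1) by (simp add: conj_def m_assoc cancel)
  have conj_inj: "z1 = z2" if "conj z1 = conj z2" "z1 \<in> carrier G" "z2 \<in> carrier G" for z1 z2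
    using that a(1) by (simp add: conj_def)
  have conj_one: "conj \<one> = \<one>" using a(1) by (simp add: conj_def)
  have "conj x = conj y"
  proof (rule group.cyclic_group_involution_unique[OF _ assms(3)])
    show "group (subgroup_generated G P)" by simp
    show "conj x \<in> carrier (subgroup_generated G P)" "conj y \<in> carrier (subgroup_generated G P)"
      using a P by (simp_all add: conj_def subgroup.carrier_subgroup_generated_subgroup)
    show "conj x \<otimes>\<^bsub>subgroup_generated G P\<^esub> conj x = \<one>\<^bsub>subgroup_generated G P\<^esub>"
      "conj y \<otimes>\<^bsub>subgroup_generated G P\<^esub> conj y = \<one>\<^bsub>subgroup_generated G P\<^esub>"
      using conj_mult[OF x(1) x(1)] conj_mult[OF y(1) y(1)] x(2) y(2) conj_one by simp_all
    show "conj x \<noteq> \<one>\<^bsub>subgroup_generated G P\<^esub>" "conj y \<noteq> \<one>\<^bsub>subgroup_generated G P\<^esub>"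
      using conj_inj[OF _ x(1) one_closed] conj_inj[OF _ y(1) one_closed] x(3) y(3) conj_one
      by auto
  qed
  then show False using conj_inj x(1) y(1) xy(2) by blast
qed

lemma (in group) conjugate_involution_triple_in_lower_central:
  assumes "T \<subseteq> carrier G" "\<And>t. t \<in> T \<Longrightarrow> t \<otimes> t = \<one>"
    and conjugate: "\<And>s t. s \<in> T \<Longrightarrow> t \<in> T \<Longrightarrow> \<exists>g\<in>carrier G. t = g \<otimes> s \<otimes> inv g"
  shows "x \<in> T \<Longrightarrow> y \<in> T \<Longrightarrow> x \<otimes> y \<in> T \<Longrightarrow> x \<in> lower_central G n"
proof (induction n arbitrary: x y)
  case 0
  then show ?case using assms(1) by auto
next
  case (Suc n)
  define c where "c = x \<otimes> y"
  have carr: "x \<in> carrier G" "y \<in> carrier G" "c \<in> carrier G"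
    using Suc.prems assms(1) by (auto simp: c_def)
  have invol: "x \<otimes> x = \<one>" "y \<otimes> y = \<one>" "c \<otimes> c = \<one>"
    using Suc.prems assms(2) by (auto simp: c_def)
  have "c \<in> T" using Suc.prems(3) by (simp add: c_def)
  have "c \<otimes> x = y \<otimes> x \<otimes> x"
    using involutions_commute[OF carr(1,2) invol(1,2)] invol(3) by (simp add: c_def)
  also have "\<dots> = y" using carr invol(1) by (simp add: m_assoc)
  finally have "c \<in> lower_central G n"
    using Suc.IH[OF \<open>c \<in> T\<close> Suc.prems(1)] Suc.prems(2) by simp
  obtain g where g: "g \<in> carrier G" "y = g \<otimes> c \<otimes> inv g"
    using conjugate[OF \<open>c \<in> T\<close> Suc.prems(2)] by blast
  have "inv c = c" using invol(3) carr(3) by (simp add: inv_equality)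
  then have "c \<otimes> g \<otimes> inv c \<otimes> inv g = c \<otimes> y"
    using g carr by (simp add: m_assoc)
  also have "\<dots> = x" using carr invol(2) by (simp add: c_def m_assoc)
  finally show ?case using \<open>c \<in> lower_central G n\<close> g(1) by (auto intro!: generate.incl)
qed

lemma point_stab_intersecting:
  assumes "v \<in> V"
  shows "intersecting V G (point_stab G v)"
  using assms by (auto simp: intersecting_def point_stab_def intro!: bexI[of _ v])

lemma EKR_if_intersecting_card_le:
  assumes "v0 \<in> V" "\<And>v. v \<in> V \<Longrightarrow> card (point_stab G v) = k"
    and bound: "\<And>F. intersecting V G F \<Longrightarrow> card F \<le> k"
  shows "EKR V G"
proof -
  have "{card (point_stab G v) | v. v \<in> V} = {k}" using assms(1,2) by auto
  moreover have "Max {card F | F. intersecting V G F} = k"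
  proof (rule Max_eqI)
    show "finite {card F | F. intersecting V G F}"
      by (rule finite_subset[of _ "{..k}"]) (auto dest: bound)
    show "k \<in> {card F | F. intersecting V G F}"
      using point_stab_intersecting[OF assms(1)] assms(1,2) by force
  qed (auto dest: bound)
  ultimately show ?thesis unfolding EKR_def by simp
qed

locale transitive_stab_two =
  fixes H :: "('a \<Rightarrow> 'a) monoid" (structure) and V :: "'a set" and G :: "('a \<Rightarrow> 'a) set"
  assumes H_eq: "H = pgroup V G"
    and perm_group: "perm_group V G"
    and transitive: "transitive_on V G"
    and card_point_stab: "\<And>v. v \<in> V \<Longrightarrow> card (point_stab G v) = 2"

sublocale transitive_stab_two \<subseteq> group H
  using H_eq by (simp add: pgroup_def group.group_subgroup_generated group_BijGroup)

context transitive_stab_two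
begin

lemma carrier_eq: "carrier H = G"
  using perm_group H_eq
  by (simp add: perm_group_def pgroup_def subgroup.carrier_subgroup_generated_subgroup)

lemma subset_Bij: "G \<subseteq> Bij V"
  using perm_group subgroup.subset by (fastforce simp: perm_group_def BijGroup_def)

lemma finite_carrier: "finite (carrier H)"
proof -
  have "Bij V \<subseteq> V \<rightarrow>\<^sub>E V" by (auto simp: Bij_def bij_betw_def PiE_def)
  moreover have "finite V" using perm_group by (simp add: perm_group_def)
  ultimately show ?thesis using subset_Bij carrier_eq by (metis finite_PiE finite_subset)
qed

lemma mult_apply: "x \<in> G \<Longrightarrow> y \<in> G \<Longrightarrow> v \<in> V \<Longrightarrow> (x \<otimes> y) v = x (y v)"
  using H_eq subset_Bij by (auto simp: pgroup_def BijGroup_def compose_def)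

lemma one_apply: "v \<in> V \<Longrightarrow> \<one> v = v"
  using H_eq by (simp add: pgroup_def BijGroup_def)

lemma inv_apply: "x \<in> G \<Longrightarrow> v \<in> V \<Longrightarrow> (inv x) (x v) = v"
  using mult_apply[of "inv x" x v] one_apply carrier_eq by auto

definition stab_elems :: "('a \<Rightarrow> 'a) set" where
  "stab_elems = {x \<in> G. x \<noteq> \<one> \<and> (\<exists>v\<in>V. x v = v)}"

lemma point_stab_eq:
  assumes "v \<in> V" "x \<in> G" "x v = v" "x \<noteq> \<one>"
  shows "point_stab G v = {\<one>, x}"
proof (rule card_subset_eq[symmetric])
  show "finite (point_stab G v)" using card_point_stab[OF assms(1)] card.infinite by fastforce
  show "{\<one>, x} \<subseteq> point_stab G v"
    using assms carrier_eq one_apply by (auto simp: point_stab_def)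
  show "card {\<one>, x} = card (point_stab G v)" using assms card_point_stab by simp
qed

lemma stab_elem_involution:
  assumes "x \<in> stab_elems"
  shows "x \<otimes> x = \<one>"
proof -
  obtain v where v: "v \<in> V" "x \<in> G" "x v = v" "x \<noteq> \<one>" using assms by (auto simp: stab_elems_def)
  have "x \<otimes> x \<in> point_stab G v"
    using v carrier_eq mult_apply by (auto simp: point_stab_def)
  then have "x \<otimes> x = \<one> \<or> x \<otimes> x = x" using point_stab_eq[OF v] by auto
  then show ?thesis using v carrier_eq by (metis r_one l_cancel one_closed)
qed

lemma stab_elems_conjugate:
  assumes "s \<in> stab_elems" "t \<in> stab_elems"
  shows "\<exists>g\<in>carrier H. t = g \<otimes> s \<otimes> inv g"
proof -
  obtain v where v: "v \<in> V" "s \<in> G" "s v = v" "s \<noteq> \<one>" using assms by (auto simp: stab_elems_def)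
  obtain w where w: "w \<in> V" "t \<in> G" "t w = w" "t \<noteq> \<one>" using assms by (auto simp: stab_elems_def)
  obtain g where g: "g \<in> G" "g v = w" using transitive v w by (auto simp: transitive_on_def)
  define c where "c = g \<otimes> s \<otimes> inv g"
  have "c \<in> G" using g v by (simp add: c_def carrier_eq[symmetric])
  moreover have "c w = w"
  proof -
    have "inv g \<in> G" "g \<otimes> s \<in> G" using g(1) v(2) by (simp_all add: carrier_eq[symmetric])
    moreover have "(inv g) w = v" using inv_apply[OF g(1) v(1)] g(2) by simp
    ultimately show ?thesis using g v w by (simp add: c_def mult_apply)
  qed
  moreover have "c \<noteq> \<one>"
    using g v carrier_eq by (auto simp: c_def inv_solve_right')
  ultimately have "point_stab G w = {\<one>, c}" using point_stab_eq[OF w(1)] by blast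
  moreover have "t \<in> point_stab G w" using w by (simp add: point_stab_def)
  ultimately have "t = c" using w by auto
  then show ?thesis using g carrier_eq c_def by blast
qed

lemma stab_elem_if_agree:
  assumes "f \<in> G" "h \<in> G" "f \<noteq> h" "v \<in> V" "f v = h v"
  shows "inv f \<otimes> h \<in> stab_elems"
proof -
  have "inv f \<in> G" "inv f \<otimes> h \<in> G" using assms(1,2) by (simp_all add: carrier_eq[symmetric])
  moreover have "(inv f \<otimes> h) v = v"
    using mult_apply[OF \<open>inv f \<in> G\<close> assms(2,4)] inv_apply[OF assms(1,4)] assms(5) by simp
  moreover have "inv f \<otimes> h \<noteq> \<one>" using assms(1-3) by (simp add: carrier_eq[symmetric] inv_solve_left')
  ultimately show ?thesis using assms(4) by (auto simp: stab_elems_def)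
qed

lemma stab_triple_if_intersecting:
  assumes "intersecting V G F" "2 < card F"
  obtains x y where "x \<in> stab_elems" "y \<in> stab_elems" "x \<otimes> y \<in> stab_elems"
proof -
  obtain S where "S \<subseteq> F" "card S = 3"
    using obtain_subset_with_card_n[of 3 F] assms(2) by auto
  then obtain f1 f2 f3 where f: "f1 \<in> F" "f2 \<in> F" "f3 \<in> F" "f1 \<noteq> f2" "f2 \<noteq> f3" "f1 \<noteq> f3"
    by (auto simp: card_3_iff)
  have diff: "inv f \<otimes> h \<in> stab_elems" if "f \<in> F" "h \<in> F" "f \<noteq> h" for f h
    using assms(1) that stab_elem_if_agree unfolding intersecting_def by blast
  have "f1 \<in> carrier H" "f2 \<in> carrier H" "f3 \<in> carrier H"
    using f assms(1) carrier_eq by (auto simp: intersecting_def)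
  then have "(inv f1 \<otimes> f2) \<otimes> (inv f2 \<otimes> f3) = inv f1 \<otimes> f3"
    by (simp add: m_assoc[symmetric]) (simp add: m_assoc)
  then show ?thesis using that[OF diff[of f1 f2] diff[of f2 f3]] diff[of f1 f3] f by simp
qed

lemma no_stab_triple_if_cyclic_sylow:
  assumes "sylow_subgroup 2 H P" "cyclic_group (subgroup_generated H P)"
    and "x \<in> stab_elems" "y \<in> stab_elems" "x \<otimes> y \<in> stab_elems"
  shows False
proof (rule no_four_group_if_cyclic_sylow[OF finite_carrier assms(1,2)])
  show "x \<in> carrier H" "y \<in> carrier H" "x \<noteq> \<one>" "y \<noteq> \<one>"
    using assms(3,4) carrier_eq by (auto simp: stab_elems_def)
  show "x \<otimes> x = \<one>" "y \<otimes> y = \<one>" "x \<otimes> y \<otimes> (x \<otimes> y) = \<one>"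
    using assms(3-5) stab_elem_involution by auto
  show "x \<noteq> y" using assms(5) \<open>x \<otimes> x = \<one>\<close> by (auto simp: stab_elems_def)
qed

lemma no_stab_triple_if_nilpotent:
  assumes "nilpotent_group H"
    and "x \<in> stab_elems" "y \<in> stab_elems" "x \<otimes> y \<in> stab_elems"
  shows False
proof -
  obtain n where n: "lower_central H n = {\<one>}" using assms(1) by (auto simp: nilpotent_group_def)
  have "stab_elems \<subseteq> carrier H" using carrier_eq by (auto simp: stab_elems_def)
  then have "x \<in> lower_central H n"
    using conjugate_involution_triple_in_lower_central[OF _ stab_elem_involution stab_elems_conjugate]
      assms(2-4) by blast
  then show False using n assms(2) by (simp add: stab_elems_def)
qed

end

theorem proposition3p2:
  fixes V :: "'a set" and G :: "('a \<Rightarrow> 'a) set"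
  assumes "perm_group V G"
    and "V \<noteq> {}"
    and "transitive_on V G"
    and "\<forall>v\<in>V. card (point_stab G v) = 2"
    and "(\<exists>P. sylow_subgroup 2 (pgroup V G) P
              \<and> cyclic_group (subgroup_generated (pgroup V G) P))
         \<or> nilpotent_group (pgroup V G)"
  shows "EKR V G"
proof -
  interpret transitive_stab_two "pgroup V G" V G
    using assms(1,3,4) by (unfold_locales) (simp_all add: pgroup_def)
  have bound: "card F \<le> 2" if F: "intersecting V G F" for F
  proof (rule ccontr)
    assume "\<not> card F \<le> 2"
    then have "2 < card F" by simp
    then obtain x y where xy: "x \<in> stab_elems" "y \<in> stab_elems" "x \<otimes>\<^bsub>pgroup V G\<^esub> y \<in> stab_elems"
      by (rule stab_triple_if_intersecting[OF F])
    from assms(5) show False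
      using no_stab_triple_if_cyclic_sylow[OF _ _ xy] no_stab_triple_if_nilpotent[OF _ xy] by metis
  qed
  obtain v0 where "v0 \<in> V" using assms(2) by blast
  then show ?thesis using EKR_if_intersecting_card_le[OF _ _ bound] assms(4) by simp
qed

end
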